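(* Let $\mathbf v\in V$ be nonzero with $L_1\mathbf v=L_2\mathbf v=\mathbf 0$, $H_1\mathbf v=m_1\mathbf v$ and $H_2\mathbf v=m_2\mathbf v$. Then $L_3R_1^i\mathbf v=L_3R_2^j\mathbf v=\mathbf 0$ for all nonnegative integers $i,j$, and for all positive integers $i,j$: (i) $L_3R_1^iR_2^j\mathbf v=-ij(m_2-j+1)\,R_1^{i-1}R_2^{j-1}\mathbf v$; (ii) $L_3R_2^jR_1^i\mathbf v=ij(m_1-i+1)\,R_2^{j-1}R_1^{i-1}\mathbf v$.
   Context: Let $d\ge1$, $\mathbb F_3=\{0,1,2\}$, $X=\mathbb F_3^d$, and $V=\mathbb C^X$ with standard basis $\{\hat y:y\in X\}$. The type of $y\in X$ is $(r,s,t)$ where $r,s,t$ are the numbers of coordinates of $y$ equal to $0,1,2$ respectively ($r+s+t=d$). Define linear operators on $V$ by their action on basis vectors: $R_1\hat y$ is the sum of $\hat z$ over all $z$ obtained from $y$ by changing exactly one coordinate equal to $0$ into $1$ (an empty sum is $0$); similarly $R_2$ changes one coordinate $1\mapsto2$, $L_1$ changes one coordinate $1\mapsto 0$, $L_2$ changes one coordinate $2\mapsto1$, $L_3$ changes one coordinate $2\mapsto 0$. For $y$ of type $(r,s,t)$, $H_1\hat y=(r-s)\hat y$ and $H_2\hat y=(s-t)\hat y$. *)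

theory Defs
  imports Complex_Main "HOL-Library.Numeral_Type"
begin

text \<open>X = F_3^d is modelled as the type of functions 'n => 3 for a finite index
type 'n with CARD('n) = d.\<close>

type_synonym 'n vec3 = "('n \<Rightarrow> 3) \<Rightarrow> complex"

definition basis3 :: "('n \<Rightarrow> 3) \<Rightarrow> 'n vec3" where
  "basis3 y = (\<lambda>z. if z = y then 1 else 0)"

definition change_op :: "3 \<Rightarrow> 3 \<Rightarrow> ('n::finite) vec3 \<Rightarrow> 'n vec3" where
  "change_op a b v = (\<lambda>z. \<Sum>y\<in>UNIV. v y *
      (\<Sum>k\<in>{k. y k = a}. basis3 (y(k := b)) z))"

definition R1 :: "('n::finite) vec3 \<Rightarrow> 'n vec3" where "R1 = change_op 0 1"
definition R2 :: "('n::finite) vec3 \<Rightarrow> 'n vec3" where "R2 = change_op 1 2"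
definition L1 :: "('n::finite) vec3 \<Rightarrow> 'n vec3" where "L1 = change_op 1 0"
definition L2 :: "('n::finite) vec3 \<Rightarrow> 'n vec3" where "L2 = change_op 2 1"
definition L3 :: "('n::finite) vec3 \<Rightarrow> 'n vec3" where "L3 = change_op 2 0"

text \<open>Number of coordinates of y equal to a (so the type of y is (cnt 0, cnt 1, cnt 2)).\<close>
definition cnt :: "3 \<Rightarrow> ('n::finite \<Rightarrow> 3) \<Rightarrow> nat" where
  "cnt a y = card {k. y k = a}"

definition H1 :: "('n::finite) vec3 \<Rightarrow> 'n vec3" where
  "H1 v = (\<lambda>y. (of_int (int (cnt 0 y) - int (cnt 1 y))) * v y)"
definition H2 :: "('n::finite) vec3 \<Rightarrow> 'n vec3" where
  "H2 v = (\<lambda>y. (of_int (int (cnt 1 y) - int (cnt 2 y))) * v y)"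

definition smul3 :: "complex \<Rightarrow> 'n vec3 \<Rightarrow> 'n vec3" (infixr "\<cdot>\<^sub>V" 75) where
  "c \<cdot>\<^sub>V v = (\<lambda>y. c * v y)"
definition zero3 :: "'n vec3" ("0\<^sub>V") where "0\<^sub>V = (\<lambda>y. 0)"

end

theory Submission
  imports Defs
begin

text \<open>The operators satisfy the commutation relations of \<open>sl(3)\<close>: \<open>L3 = [L1, L2]\<close>,
  \<open>[L3, R1] = -L2\<close>, \<open>[L3, R2] = L1\<close>, \<open>[L2, R1] = [L1, R2] = 0\<close>, \<open>[L1, R1] = H1\<close>,
  \<open>[L2, R2] = H2\<close>, \<open>[H1, R1] = -2 R1\<close> and \<open>[H2, R2] = -2 R2\<close>, all instances of one
  formula for the commutator of two coordinate-changing operators.  Hence \<open>L3 v = 0\<close>, and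
  pushing \<open>L3\<close> through a power of \<open>R1\<close> (resp. \<open>R2\<close>) leaves a multiple of \<open>L2\<close>
  (resp. \<open>L1\<close>), whose action on \<open>R2\<^sup>j v\<close> (resp. \<open>R1\<^sup>i v\<close>) is the classical
  \<open>sl(2)\<close> computation for a highest weight vector.\<close>

lemma sum_Collect_eq_sum_If:
  "(\<Sum>k | P k. g k) = (\<Sum>k\<in>(UNIV::('a::finite) set). if P k then g k else 0)"
  by (simp add: sum.If_cases)

lemma change_op_apply:
  fixes v :: "('n::finite) vec3"
  assumes "a \<noteq> b"
  shows "change_op a b v z = (\<Sum>k | z k = b. v (z(k := a)))"
proof -
  have preimage: "(y k = a \<and> z = y(k := b)) \<longleftrightarrow> (z k = b \<and> y = z(k := a))" for y k
    using assms by (metis fun_upd_same fun_upd_upd fun_upd_triv)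
  have "change_op a b v z = (\<Sum>y\<in>UNIV. \<Sum>k\<in>UNIV. if y k = a \<and> z = y(k := b) then v y else 0)"
    unfolding change_op_def basis3_def
    by (simp add: sum_distrib_left sum_Collect_eq_sum_If) (intro sum.cong refl; simp)
  also have "\<dots> = (\<Sum>k\<in>UNIV. \<Sum>y\<in>UNIV. if z k = b \<and> y = z(k := a) then v y else 0)"
    by (subst sum.swap) (simp only: preimage)
  also have "\<dots> = (\<Sum>k | z k = b. v (z(k := a)))"
    unfolding sum_Collect_eq_sum_If by (rule sum.cong) auto
  finally show ?thesis .
qed

lemma change_op_change_op:
  fixes v :: "('n::finite) vec3"
  assumes "a \<noteq> b" "c \<noteq> d"
  shows "change_op c d (change_op a b v) z =
     (if c = b then (\<Sum>k | z k = d. v (z(k := a))) else 0)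
     + (\<Sum>k | z k = d. \<Sum>l | l \<noteq> k \<and> z l = b. v (z(k := c, l := a)))"
proof -
  have "{l. (z(k := c)) l = b} = (if c = b then insert k else id) {l. l \<noteq> k \<and> z l = b}" for k
    by auto
  then show ?thesis
    using assms by (simp add: change_op_apply sum.distrib if_distrib cong: if_cong)
qed

text \<open>The terms of a double change in which two distinct coordinates are changed cancel in
  the commutator; only the terms where the second change undoes or extends the first survive.\<close>
lemma change_op_commutator:
  fixes v :: "('n::finite) vec3"
  assumes "a \<noteq> b" "c \<noteq> d"
  shows "change_op c d (change_op a b v) z = change_op a b (change_op c d v) z
     + (if c = b then (\<Sum>k | z k = d. v (z(k := a))) else 0)
     - (if a = d then (\<Sum>k | z k = b. v (z(k := c))) else 0)"
proof -
  have double_change: "(\<Sum>k | z k = d. \<Sum>l | l \<noteq> k \<and> z l = b. v (z(k := c, l := a))) =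
      (\<Sum>k\<in>UNIV. \<Sum>l\<in>UNIV. if z k = d \<and> l \<noteq> k \<and> z l = b then v (z(k := c, l := a)) else 0)"
    for a b c d
    unfolding sum_Collect_eq_sum_If by (rule sum.cong) auto
  have "(\<Sum>k | z k = d. \<Sum>l | l \<noteq> k \<and> z l = b. v (z(k := c, l := a))) =
        (\<Sum>l | z l = b. \<Sum>k | k \<noteq> l \<and> z k = d. v (z(l := a, k := c)))"
    unfolding double_change
    by (subst sum.swap) (auto simp: fun_upd_twist intro!: sum.cong)
  then show ?thesis
    using assms by (simp add: change_op_change_op)
qed

lemma sum_fun_upd_idem_eq_cnt:
  fixes v :: "('n::finite) vec3"
  shows "(\<Sum>k | z k = a. v (z(k := a))) = of_nat (cnt a z) * v z"
proof -
  have "(\<Sum>k | z k = a. v (z(k := a))) = (\<Sum>k | z k = a. v z)"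
    by (rule sum.cong) (auto simp: fun_upd_idem)
  then show ?thesis by (simp add: cnt_def)
qed

lemma cnt_fun_upd_new:
  fixes z :: "'n::finite \<Rightarrow> 3"
  assumes "z k \<noteq> a"
  shows "int (cnt a (z(k := a))) = int (cnt a z) + 1"
proof -
  have "{l. (z(k := a)) l = a} = insert k {l. z l = a}" by auto
  then show ?thesis using assms by (simp add: cnt_def)
qed

lemma cnt_fun_upd_old:
  fixes z :: "'n::finite \<Rightarrow> 3"
  assumes "z k = b" "a \<noteq> b"
  shows "int (cnt b (z(k := a))) = int (cnt b z) - 1"
proof -
  have "{l. (z(k := a)) l = b} = {l. z l = b} - {k}" using assms by auto
  moreover have "card {l. z l = b} > 0" using assms by (auto simp: card_gt_0_iff)
  ultimately show ?thesis using assms by (simp add: cnt_def card_Diff_singleton)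
qed

lemma change_op_weight:
  fixes v :: "('n::finite) vec3"
  assumes "a \<noteq> b" "\<And>z k. z k = b \<Longrightarrow> f (z(k := a)) = f z + c"
  shows "change_op a b (\<lambda>y. f y * v y) z = (f z + c) * change_op a b v z"
  using assms by (simp add: change_op_apply sum_distrib_left)

lemma change_op_smul: "change_op a b (c \<cdot>\<^sub>V w) = c \<cdot>\<^sub>V change_op a b w"
  unfolding change_op_def smul3_def by (simp add: sum_distrib_left mult.assoc)

lemma L3_eq_commutator: "L3 v z = L1 (L2 v) z - L2 (L1 v) z"
  unfolding L1_def L2_def L3_def
  by (simp add: change_op_commutator[of 2 1 1 0] change_op_apply[of 2 0])

lemma L3_R1: "L3 (R1 v) z = R1 (L3 v) z - L2 v z"
  unfolding R1_def L2_def L3_def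
  by (simp add: change_op_commutator[of 0 1 2 0] change_op_apply[of 2 1])

lemma L3_R2: "L3 (R2 v) z = R2 (L3 v) z + L1 v z"
  unfolding R2_def L1_def L3_def
  by (simp add: change_op_commutator[of 1 2 2 0] change_op_apply[of 1 0])

lemma L2_R1: "L2 (R1 v) = R1 (L2 v)"
  unfolding R1_def L2_def
  by (simp add: fun_eq_iff change_op_commutator[of 0 1 2 1])

lemma L1_R2: "L1 (R2 v) = R2 (L1 v)"
  unfolding R2_def L1_def
  by (simp add: fun_eq_iff change_op_commutator[of 1 2 1 0])

lemma L2_R2: "L2 (R2 v) z = R2 (L2 v) z + H2 v z"
  unfolding R2_def L2_def H2_def
  by (simp add: change_op_commutator[of 1 2 2 1] sum_fun_upd_idem_eq_cnt algebra_simps)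

lemma L1_R1: "L1 (R1 v) z = R1 (L1 v) z + H1 v z"
  unfolding R1_def L1_def H1_def
  by (simp add: change_op_commutator[of 0 1 1 0] sum_fun_upd_idem_eq_cnt algebra_simps)

lemma H2_R2: "H2 (R2 v) z = R2 (H2 v) z - 2 * R2 v z"
proof -
  have RH: "R2 (H2 v) z = (of_int (int (cnt 1 z) - int (cnt 2 z)) + 2) * R2 v z"
    unfolding R2_def H2_def
    by (rule change_op_weight) (simp_all add: cnt_fun_upd_new cnt_fun_upd_old)
  have HR: "H2 (R2 v) z = of_int (int (cnt 1 z) - int (cnt 2 z)) * R2 v z"
    by (simp only: H2_def)
  show ?thesis
    unfolding RH HR by (simp add: algebra_simps)
qed

lemma H1_R1: "H1 (R1 v) z = R1 (H1 v) z - 2 * R1 v z"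
proof -
  have RH: "R1 (H1 v) z = (of_int (int (cnt 0 z) - int (cnt 1 z)) + 2) * R1 v z"
    unfolding R1_def H1_def
    by (rule change_op_weight) (simp_all add: cnt_fun_upd_new cnt_fun_upd_old)
  have HR: "H1 (R1 v) z = of_int (int (cnt 0 z) - int (cnt 1 z)) * R1 v z"
    by (simp only: H1_def)
  show ?thesis
    unfolding RH HR by (simp add: algebra_simps)
qed

lemma smul3_smul3: "a \<cdot>\<^sub>V (b \<cdot>\<^sub>V w) = (a * b) \<cdot>\<^sub>V w"
  by (simp add: smul3_def fun_eq_iff)

lemma homogeneous_zero:
  fixes B :: "'n vec3 \<Rightarrow> 'n vec3"
  assumes "\<And>c w. B (c \<cdot>\<^sub>V w) = c \<cdot>\<^sub>V B w"
  shows "B 0\<^sub>V = 0\<^sub>V"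
  using assms[of 0 "0\<^sub>V"] by (simp add: smul3_def zero3_def)

lemma homogeneous_funpow:
  fixes B :: "'n vec3 \<Rightarrow> 'n vec3"
  assumes "\<And>c w. B (c \<cdot>\<^sub>V w) = c \<cdot>\<^sub>V B w"
  shows "(B ^^ n) (c \<cdot>\<^sub>V w) = c \<cdot>\<^sub>V (B ^^ n) w"
  by (induction n) (simp_all add: assms)

lemma commuting_funpow:
  assumes "\<And>w. C (B w) = B (C w)"
  shows "C ((B ^^ n) w) = (B ^^ n) (C w)"
  by (induction n) (simp_all add: assms)

lemma commutator_funpow:
  fixes A B C :: "'n vec3 \<Rightarrow> 'n vec3"
  assumes hom: "\<And>c w. B (c \<cdot>\<^sub>V w) = c \<cdot>\<^sub>V B w"
    and comm: "\<And>w z. A (B w) z = B (A w) z + C w z"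
    and C_B: "\<And>w. C (B w) = B (C w)"
    and "A u = 0\<^sub>V"
  shows "A ((B ^^ Suc n) u) = of_nat (Suc n) \<cdot>\<^sub>V (B ^^ n) (C u)"
proof (induction n)
  case 0
  show ?case
    by (simp add: fun_eq_iff comm \<open>A u = 0\<^sub>V\<close> homogeneous_zero[OF hom])
      (simp add: smul3_def zero3_def)
next
  case (Suc n)
  show ?case
  proof (rule ext)
    fix z
    have "A ((B ^^ Suc (Suc n)) u) z = B (A ((B ^^ Suc n) u)) z + C ((B ^^ Suc n) u) z"
      by (simp only: funpow.simps(2) comp_apply comm)
    also have "\<dots> = of_nat (Suc (Suc n)) * (B ^^ Suc n) (C u) z"
      by (simp only: Suc.IH hom commuting_funpow[of C B, OF C_B]) (simp add: smul3_def algebra_simps)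
    finally show "A ((B ^^ Suc (Suc n)) u) z = (of_nat (Suc (Suc n)) \<cdot>\<^sub>V (B ^^ Suc n) (C u)) z"
      by (simp only: smul3_def)
  qed
qed

lemma weight_funpow:
  fixes B H :: "'n vec3 \<Rightarrow> 'n vec3"
  assumes hom: "\<And>c w. B (c \<cdot>\<^sub>V w) = c \<cdot>\<^sub>V B w"
    and comm: "\<And>w z. H (B w) z = B (H w) z - 2 * B w z"
    and "H u = m \<cdot>\<^sub>V u"
  shows "H ((B ^^ n) u) = (m - 2 * of_nat n) \<cdot>\<^sub>V (B ^^ n) u"
proof (induction n)
  case 0
  show ?case using \<open>H u = m \<cdot>\<^sub>V u\<close> by simp
next
  case (Suc n)
  show ?case
    by (simp add: fun_eq_iff comm Suc hom) (simp add: smul3_def algebra_simps)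
qed

lemma lowering_funpow:
  fixes A B H :: "'n vec3 \<Rightarrow> 'n vec3"
  assumes hom: "\<And>c w. B (c \<cdot>\<^sub>V w) = c \<cdot>\<^sub>V B w"
    and comm_H: "\<And>w z. H (B w) z = B (H w) z - 2 * B w z"
    and comm: "\<And>w z. A (B w) z = B (A w) z + H w z"
    and "A u = 0\<^sub>V" and "H u = m \<cdot>\<^sub>V u"
  shows "A ((B ^^ Suc n) u) = (of_nat (Suc n) * (m - of_nat n)) \<cdot>\<^sub>V (B ^^ n) u"
proof (induction n)
  case 0
  show ?case
    by (simp add: fun_eq_iff comm \<open>A u = 0\<^sub>V\<close> \<open>H u = m \<cdot>\<^sub>V u\<close> homogeneous_zero[OF hom])
      (simp add: zero3_def)
next
  case (Suc n)
  show ?case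
  proof (rule ext)
    fix z
    have "A ((B ^^ Suc (Suc n)) u) z = B (A ((B ^^ Suc n) u)) z + H ((B ^^ Suc n) u) z"
      by (simp only: funpow.simps(2) comp_apply comm)
    also have "\<dots> = of_nat (Suc (Suc n)) * (m - of_nat (Suc n)) * (B ^^ Suc n) u z"
      by (simp only: Suc.IH hom weight_funpow[where B = B and H = H, OF hom comm_H \<open>H u = m \<cdot>\<^sub>V u\<close>])
        (simp add: smul3_def algebra_simps)
    finally show "A ((B ^^ Suc (Suc n)) u) z =
        ((of_nat (Suc (Suc n)) * (m - of_nat (Suc n))) \<cdot>\<^sub>V (B ^^ Suc n) u) z"
      by (simp only: smul3_def)
  qed
qed

lemma R1_smul: "R1 (c \<cdot>\<^sub>V w) = c \<cdot>\<^sub>V R1 w"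
  unfolding R1_def by (rule change_op_smul)

lemma R2_smul: "R2 (c \<cdot>\<^sub>V w) = c \<cdot>\<^sub>V R2 w"
  unfolding R2_def by (rule change_op_smul)

lemma L3_R1_funpow:
  fixes u :: "('n::finite) vec3"
  assumes "L3 u = 0\<^sub>V"
  shows "L3 ((R1 ^^ Suc i) u) = (- of_nat (Suc i)) \<cdot>\<^sub>V (R1 ^^ i) (L2 u)"
proof -
  have "L3 ((R1 ^^ Suc i) u) = of_nat (Suc i) \<cdot>\<^sub>V (R1 ^^ i) ((- 1) \<cdot>\<^sub>V L2 u)"
  proof (rule commutator_funpow[where A = L3 and B = R1 and C = "\<lambda>w. (- 1) \<cdot>\<^sub>V L2 w"])
    show "R1 (c \<cdot>\<^sub>V w) = c \<cdot>\<^sub>V R1 w" for c and w :: "'n vec3"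
      by (rule R1_smul)
    show "L3 (R1 w) z = R1 (L3 w) z + ((- 1) \<cdot>\<^sub>V L2 w) z" for w :: "'n vec3" and z
      by (simp add: L3_R1 smul3_def)
    show "(- 1) \<cdot>\<^sub>V L2 (R1 w) = R1 ((- 1) \<cdot>\<^sub>V L2 w)" for w :: "'n vec3"
      by (simp only: L2_R1 R1_smul)
  qed (rule assms)
  then show ?thesis
    by (simp only: homogeneous_funpow[OF R1_smul] smul3_smul3) simp
qed

lemma L3_R2_funpow:
  assumes "L3 u = 0\<^sub>V"
  shows "L3 ((R2 ^^ Suc j) u) = of_nat (Suc j) \<cdot>\<^sub>V (R2 ^^ j) (L1 u)"
  by (rule commutator_funpow[where A = L3 and B = R2 and C = L1, OF R2_smul L3_R2 L1_R2 assms])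

lemma L2_R2_funpow:
  assumes "L2 v = 0\<^sub>V" "H2 v = m \<cdot>\<^sub>V v"
  shows "L2 ((R2 ^^ Suc j) v) = (of_nat (Suc j) * (m - of_nat j)) \<cdot>\<^sub>V (R2 ^^ j) v"
  by (rule lowering_funpow[where A = L2 and B = R2 and H = H2, OF R2_smul H2_R2 L2_R2 assms])

lemma L1_R1_funpow:
  assumes "L1 v = 0\<^sub>V" "H1 v = m \<cdot>\<^sub>V v"
  shows "L1 ((R1 ^^ Suc i) v) = (of_nat (Suc i) * (m - of_nat i)) \<cdot>\<^sub>V (R1 ^^ i) v"
  by (rule lowering_funpow[where A = L1 and B = R1 and H = H1, OF R1_smul H1_R1 L1_R1 assms])

lemma change_op_zero: "change_op a b 0\<^sub>V = 0\<^sub>V"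
  unfolding change_op_def zero3_def by simp

lemma smul3_zero: "c \<cdot>\<^sub>V 0\<^sub>V = 0\<^sub>V"
  by (simp add: smul3_def zero3_def)

lemma L3_eq_zero_if_L1_L2_eq_zero:
  assumes "L1 v = 0\<^sub>V" "L2 v = 0\<^sub>V"
  shows "L3 v = 0\<^sub>V"
proof (rule ext)
  fix z
  show "L3 v z = 0\<^sub>V z"
    unfolding L3_eq_commutator assms unfolding L1_def L2_def change_op_zero
    by (simp add: zero3_def)
qed

theorem lemma2p9:
  fixes v :: "('n::finite) vec3" and m1 m2 :: complex
  assumes "v \<noteq> 0\<^sub>V"
    and "L1 v = 0\<^sub>V" and "L2 v = 0\<^sub>V"
    and "H1 v = m1 \<cdot>\<^sub>V v" and "H2 v = m2 \<cdot>\<^sub>V v"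
  shows "(\<forall>i j. L3 ((R1 ^^ i) v) = 0\<^sub>V \<and> L3 ((R2 ^^ j) v) = 0\<^sub>V)
    \<and> (\<forall>i j. i \<ge> 1 \<longrightarrow> j \<ge> 1 \<longrightarrow>
        L3 ((R1 ^^ i) ((R2 ^^ j) v)) =
          (- (of_nat i * of_nat j * (m2 - of_nat j + 1))) \<cdot>\<^sub>V ((R1 ^^ (i - 1)) ((R2 ^^ (j - 1)) v))
      \<and> L3 ((R2 ^^ j) ((R1 ^^ i) v)) =
          (of_nat i * of_nat j * (m1 - of_nat i + 1)) \<cdot>\<^sub>V ((R2 ^^ (j - 1)) ((R1 ^^ (i - 1)) v)))"
proof -
  have L3_v: "L3 v = 0\<^sub>V"
    using assms(2,3) by (rule L3_eq_zero_if_L1_L2_eq_zero)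
  have R1_pow_zero: "(R1 ^^ i) 0\<^sub>V = 0\<^sub>V" and R2_pow_zero: "(R2 ^^ j) 0\<^sub>V = 0\<^sub>V" for i j
    by (intro homogeneous_zero homogeneous_funpow R1_smul R2_smul)+
  have L3_R1_v: "L3 ((R1 ^^ i) v) = 0\<^sub>V" for i
    using L3_v L3_R1_funpow[OF L3_v]
    by (cases i) (simp_all only: funpow_0 assms(3) R1_pow_zero smul3_zero)
  have L3_R2_v: "L3 ((R2 ^^ j) v) = 0\<^sub>V" for j
    using L3_v L3_R2_funpow[OF L3_v]
    by (cases j) (simp_all only: funpow_0 assms(2) R2_pow_zero smul3_zero)
  have "L3 ((R1 ^^ i) ((R2 ^^ j) v)) =
          (- (of_nat i * of_nat j * (m2 - of_nat j + 1))) \<cdot>\<^sub>V ((R1 ^^ (i - 1)) ((R2 ^^ (j - 1)) v))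
      \<and> L3 ((R2 ^^ j) ((R1 ^^ i) v)) =
          (of_nat i * of_nat j * (m1 - of_nat i + 1)) \<cdot>\<^sub>V ((R2 ^^ (j - 1)) ((R1 ^^ (i - 1)) v))"
    if positive: "i \<ge> 1" "j \<ge> 1" for i j
  proof -
    obtain i' j' where "i = Suc i'" "j = Suc j'"
      using positive by (cases i; cases j) auto
    then show ?thesis
      by (simp only: diff_Suc_1 L3_R1_funpow[OF L3_R2_v] L3_R2_funpow[OF L3_R1_v]
          L2_R2_funpow[OF assms(3,5)] L1_R1_funpow[OF assms(2,4)]
          homogeneous_funpow[OF R1_smul] homogeneous_funpow[OF R2_smul] smul3_smul3)
        (simp add: algebra_simps)
  qed
  then show ?thesis
    using L3_R1_v L3_R2_v by blast
qed

end
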